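(* Let $N\ge1$ and let $f_0,\alpha,f_2,\dots,f_N$ be differentiable functions of $z$ with $\alpha(z)\in(-1,1)$; set $f_1\equiv0$ and $\hat I(z,\mu)=\sum_{i=0}^N f_i(z)\Phi_i(\mu)$, where $\Phi_i$ is taken with parameter $\alpha(z)$. Then $$\partial_z\hat I-\tilde{\mathcal P}\,\partial_z\hat I=\big(\alpha\,\partial_zf_N-4f_N\,\partial_z\alpha\big)\tilde\Phi_{N+1},$$ and consequently, for $k=0,\dots,N$, $$\int_{-1}^1\mu^{k+1}\big(\partial_z\hat I-\tilde{\mathcal P}\partial_z\hat I\big)\,d\mu=\begin{cases}0,&k<N,\\ \tilde K_{N+1,N+1}\big(\alpha\,\partial_zf_N-4f_N\,\partial_z\alpha\big),&k=N.\end{cases}$$ In particular, for $N=1$ all these quantities vanish.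
   Context: For a parameter $\alpha\in(-1,1)$ define on $[-1,1]$ the weights $\omega(\mu)=(1+\alpha\mu)^{-4}$ and $\tilde\omega(\mu)=(1+\alpha\mu)^{-5}$. Let $\{\phi_k\}_{k\ge0}$ (resp. $\{\tilde\phi_k\}_{k\ge0}$) be the monic orthogonal polynomials on $[-1,1]$ with respect to $\omega$ (resp. $\tilde\omega$); their coefficients depend smoothly on $\alpha$. Set $\Phi_k=\omega\phi_k$, $\tilde\Phi_k=\tilde\omega\tilde\phi_k$, $\tilde K_{j,k}=\int_{-1}^1\mu^j\tilde\phi_k\,\tilde\omega\,d\mu$. The operator $\tilde{\mathcal P}$ (at parameter $\alpha$) is the orthogonal projection onto $\mathrm{span}\{\tilde\Phi_0,\dots,\tilde\Phi_N\}$ with respect to the inner product $\langle\Phi,\Psi\rangle=\int_{-1}^1\Phi\Psi/\tilde\omega\,d\mu$, i.e. $\tilde{\mathcal P}g=\sum_{i=0}^N\frac{\int_{-1}^1 g\,\tilde\phi_i\,d\mu}{\tilde K_{i,i}}\tilde\Phi_i$. *)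

theory Defs
  imports "HOL-Analysis.Analysis" "HOL-Computational_Algebra.Polynomial"
begin

definition omega :: "real \<Rightarrow> real \<Rightarrow> real" where
  "omega a \<mu> = 1 / (1 + a * \<mu>) ^ 4"

definition omegat :: "real \<Rightarrow> real \<Rightarrow> real" where
  "omegat a \<mu> = 1 / (1 + a * \<mu>) ^ 5"

definition monic_OP :: "(real \<Rightarrow> real) \<Rightarrow> nat \<Rightarrow> real poly" where
  "monic_OP w k = (THE p. degree p = k \<and> lead_coeff p = 1 \<and>
     (\<forall>q. degree q < k \<longrightarrow> integral {-1..1} (\<lambda>\<mu>. poly p \<mu> * poly q \<mu> * w \<mu>) = 0))"

definition phi :: "real \<Rightarrow> nat \<Rightarrow> real poly" where
  "phi a k = monic_OP (omega a) k"

definition phit :: "real \<Rightarrow> nat \<Rightarrow> real poly" where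
  "phit a k = monic_OP (omegat a) k"

definition Phi :: "real \<Rightarrow> nat \<Rightarrow> real \<Rightarrow> real" where
  "Phi a k \<mu> = omega a \<mu> * poly (phi a k) \<mu>"

definition Phit :: "real \<Rightarrow> nat \<Rightarrow> real \<Rightarrow> real" where
  "Phit a k \<mu> = omegat a \<mu> * poly (phit a k) \<mu>"

definition Kt :: "real \<Rightarrow> nat \<Rightarrow> nat \<Rightarrow> real" where
  "Kt a j k = integral {-1..1} (\<lambda>\<mu>. \<mu> ^ j * poly (phit a k) \<mu> * omegat a \<mu>)"

definition Pt :: "real \<Rightarrow> nat \<Rightarrow> (real \<Rightarrow> real) \<Rightarrow> real \<Rightarrow> real" where
  "Pt a N g \<mu> = (\<Sum>i\<le>N. integral {-1..1} (\<lambda>\<nu>. g \<nu> * poly (phit a i) \<nu>) / Kt a i i * Phit a i \<mu>)"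

definition Ihat :: "nat \<Rightarrow> (nat \<Rightarrow> real \<Rightarrow> real) \<Rightarrow> (real \<Rightarrow> real) \<Rightarrow> real \<Rightarrow> real \<Rightarrow> real" where
  "Ihat N f \<alpha> z \<mu> = (\<Sum>i\<le>N. f i z * Phi (\<alpha> z) i \<mu>)"

end

theory Submission
  imports Defs
begin

text \<open>
  Write \<open>a = \<alpha>(z)\<close>. Since \<open>\<partial>\<^sub>a \<omega> = -4\<mu> \<omega>~\<close> and \<open>\<omega> = (1 + a\<mu>) \<omega>~\<close>, both \<open>\<Phi>\<^sub>i\<close> and
  \<open>\<partial>\<^sub>a \<Phi>\<^sub>i\<close> are \<open>\<omega>~\<close> times a polynomial of degree at most \<open>i + 1\<close>; as \<open>\<phi>\<^sub>i\<close> is monic,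
  the coefficient of \<open>\<mu>\<^sup>i\<^sup>+\<^sup>1\<close> is \<open>a\<close> resp. \<open>-4\<close>. Hence \<open>\<partial>\<^sub>z I = \<omega>~ P\<close> with
  \<open>deg P \<le> N + 1\<close> and leading coefficient \<open>c = \<alpha> f\<^sub>N' - 4 f\<^sub>N \<alpha>'\<close>. The projection reproduces
  \<open>\<omega>~ R\<close> for every polynomial \<open>R\<close> of degree \<open>\<le> N\<close> (expand \<open>R\<close> in the orthogonal basis
  \<open>\<phi>~\<^sub>0, \<dots>, \<phi>~\<^sub>N\<close>), so splitting \<open>P = R + c \<phi>~\<^sub>N\<^sub>+\<^sub>1\<close> leaves exactly \<open>c \<Phi>~\<^sub>N\<^sub>+\<^sub>1\<close>,
  whose moments against \<open>\<mu>\<^sup>k\<^sup>+\<^sup>1\<close> vanish for \<open>k < N\<close> by orthogonality.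

  That the coefficients of \<open>\<phi>\<^sub>i\<close> are differentiable in \<open>a\<close> comes from Gram--Schmidt: they are
  rational functions of the moments of \<open>\<omega>\<close>, which are differentiable by the Leibniz rule.
\<close>

definition pos_weight :: "(real \<Rightarrow> real) \<Rightarrow> bool" where
  "pos_weight w \<longleftrightarrow> continuous_on {-1..1} w \<and> (\<forall>\<mu>\<in>{-1..1}. 0 < w \<mu>)"

definition poly_inner :: "(real \<Rightarrow> real) \<Rightarrow> real poly \<Rightarrow> real poly \<Rightarrow> real" where
  "poly_inner w p q = integral {-1..1} (\<lambda>\<mu>. poly p \<mu> * poly q \<mu> * w \<mu>)"

lemma poly_inner_commute: "poly_inner w p q = poly_inner w q p"
  unfolding poly_inner_def by (simp add: mult.commute mult.left_commute)

lemma poly_inner_add_left: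
  assumes "continuous_on {-1..1} w"
  shows "poly_inner w (p + r) q = poly_inner w p q + poly_inner w r q"
  unfolding poly_inner_def distrib_right poly_add
  by (intro integral_add integrable_continuous_interval continuous_intros assms)

lemma poly_inner_0_left [simp]: "poly_inner w 0 q = 0"
  by (simp add: poly_inner_def)

lemma poly_inner_smult_left: "poly_inner w (smult c p) q = c * poly_inner w p q"
  unfolding poly_inner_def by (simp add: mult.assoc flip: integral_mult_right)

lemma poly_inner_diff_left:
  assumes "continuous_on {-1..1} w"
  shows "poly_inner w (p - r) q = poly_inner w p q - poly_inner w r q"
  using poly_inner_add_left[OF assms, of p "- r" q] poly_inner_smult_left[of w "- 1" r q] by simp

lemma poly_inner_sum_left:
  assumes "continuous_on {-1..1} w"
  shows "poly_inner w (\<Sum>i\<in>S. p i) q = (\<Sum>i\<in>S. poly_inner w (p i) q)"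
  by (induction S rule: infinite_finite_induct)
    (simp_all add: poly_inner_add_left[OF assms])

lemma poly_inner_sum_smult_left_orthogonal:
  assumes "continuous_on {-1..1} w" "finite S"
    and "\<And>i. i \<in> S \<Longrightarrow> i \<noteq> j \<Longrightarrow> poly_inner w (b i) (b j) = 0"
  shows "poly_inner w (\<Sum>i\<in>S. smult (c i) (b i)) (b j) =
    (if j \<in> S then c j * poly_inner w (b j) (b j) else 0)"
proof -
  have "poly_inner w (\<Sum>i\<in>S. smult (c i) (b i)) (b j) =
      (\<Sum>i\<in>S. if i = j then c j * poly_inner w (b j) (b j) else 0)"
    unfolding poly_inner_sum_left[OF assms(1)] poly_inner_smult_left
    by (intro sum.cong refl) (auto simp: assms(3))
  then show ?thesis using assms(2) by simp
qed

lemma poly_inner_self_pos: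
  assumes "pos_weight w" "p \<noteq> 0"
  shows "poly_inner w p p > 0"
proof -
  have cw: "continuous_on {-1..1} w" and wp: "\<And>\<mu>. \<mu> \<in> {-1..1} \<Longrightarrow> 0 < w \<mu>"
    using assms(1) unfolding pos_weight_def by auto
  have nonneg: "\<And>\<mu>. \<mu> \<in> {-1..1} \<Longrightarrow> 0 \<le> poly p \<mu> * poly p \<mu> * w \<mu>"
    using wp by (simp add: less_imp_le)
  have cont: "continuous_on {-1..1} (\<lambda>\<mu>. poly p \<mu> * poly p \<mu> * w \<mu>)"
    by (intro continuous_intros cw)
  have "poly_inner w p p \<ge> 0"
    unfolding poly_inner_def by (rule integral_nonneg[OF integrable_continuous_interval[OF cont] nonneg])
  moreover have "poly_inner w p p \<noteq> 0"
  proof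
    assume "poly_inner w p p = 0"
    then have "\<forall>\<mu>\<in>{-1..1}. poly p \<mu> * poly p \<mu> * w \<mu> = 0"
      unfolding poly_inner_def using integral_eq_0_iff[OF cont _ nonneg] by simp
    then have "{-1..1::real} \<subseteq> {\<mu>. poly p \<mu> = 0}" using wp by force
    moreover have "infinite {-1..1::real}" by (simp add: infinite_Icc)
    ultimately show False using poly_roots_finite[OF assms(2)] finite_subset by blast
  qed
  ultimately show ?thesis by simp
qed

function gram_schmidt :: "(real \<Rightarrow> real) \<Rightarrow> nat \<Rightarrow> real poly" where
  "gram_schmidt w k = monom 1 k -
     (\<Sum>j<k. smult (poly_inner w (monom 1 k) (gram_schmidt w j) /
                    poly_inner w (gram_schmidt w j) (gram_schmidt w j)) (gram_schmidt w j))"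
  by auto
termination by (relation "Wellfounded.measure snd") auto

declare gram_schmidt.simps [simp del]

lemma gram_schmidt_monic: "degree (gram_schmidt w k) = k \<and> coeff (gram_schmidt w k) k = 1"
proof (induction k rule: less_induct)
  case (less k)
  define S where "S = (\<Sum>j<k. smult (poly_inner w (monom 1 k) (gram_schmidt w j) /
      poly_inner w (gram_schmidt w j) (gram_schmidt w j)) (gram_schmidt w j))"
  have gs: "gram_schmidt w k = monom 1 k - S"
    unfolding S_def by (rule gram_schmidt.simps)
  show ?case
  proof (cases "k = 0")
    case True
    then show ?thesis using gs by (simp add: S_def)
  next
    case False
    have "degree S < k"
      unfolding S_def using False less.IH
      by (intro degree_sum_less le_less_trans[OF degree_smult_le]) auto
    then have "degree (monom 1 k + - S) = k"
      by (subst degree_add_eq_left) (simp_all add: degree_monom_eq)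
    then show ?thesis
      using gs \<open>degree S < k\<close> by (simp add: coeff_eq_0)
  qed
qed

lemma degree_gram_schmidt [simp]: "degree (gram_schmidt w k) = k"
  using gram_schmidt_monic by blast

lemma coeff_gram_schmidt_degree [simp]: "coeff (gram_schmidt w k) k = 1"
  using gram_schmidt_monic by blast

lemma gram_schmidt_nonzero [simp]: "gram_schmidt w k \<noteq> 0"
proof
  assume "gram_schmidt w k = 0"
  then show False using coeff_gram_schmidt_degree[of w k] by simp
qed

lemma gram_schmidt_orthogonal_lower:
  assumes "pos_weight w" "j < k"
  shows "poly_inner w (gram_schmidt w k) (gram_schmidt w j) = 0"
  using assms(2)
proof (induction k arbitrary: j rule: less_induct)
  case (less k)
  have cw: "continuous_on {-1..1} w" using assms(1) unfolding pos_weight_def by auto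
  have orth: "poly_inner w (gram_schmidt w i) (gram_schmidt w j) = 0" if "i < k" "i \<noteq> j" for i
  proof (cases "i < j")
    case True
    then show ?thesis
      using less.IH[of j i] less.prems poly_inner_commute[of w "gram_schmidt w i"] by simp
  next
    case False
    then show ?thesis using less.IH[of i j] that by simp
  qed
  have "poly_inner w (gram_schmidt w j) (gram_schmidt w j) \<noteq> 0"
    using poly_inner_self_pos[OF assms(1) gram_schmidt_nonzero[of w j]] by simp
  then show ?case
    using less.prems
    by (simp only: gram_schmidt.simps[of w k] poly_inner_diff_left[OF cw],
        subst poly_inner_sum_smult_left_orthogonal[OF cw]) (auto simp: orth)
qed

lemma poly_inner_eq_0_if_orthogonal_gram_schmidt:
  assumes cw: "continuous_on {-1..1} w"
    and orth: "\<And>j. j < k \<Longrightarrow> poly_inner w p (gram_schmidt w j) = 0"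
    and "degree q < k"
  shows "poly_inner w p q = 0"
  using assms(3)
proof (induction "degree q" arbitrary: q rule: less_induct)
  case less
  define d where "d = degree q"
  define r where "r = q - smult (coeff q d) (gram_schmidt w d)"
  have "poly_inner w r p = 0"
  proof (cases "r = 0")
    case False
    have "degree r \<le> d" "coeff r d = 0"
      unfolding r_def by (auto intro!: degree_diff_le order.trans[OF degree_smult_le] simp: d_def)
    then have "degree r < degree q"
      using False unfolding d_def by (metis le_antisym leading_coeff_0_iff nat_less_le)
    then have "poly_inner w p r = 0" using less.hyps less.prems by simp
    then show ?thesis by (simp add: poly_inner_commute)
  qed simp
  moreover have "poly_inner w (gram_schmidt w d) p = 0"
    using orth less.prems by (simp add: d_def poly_inner_commute)
  moreover have "poly_inner w q p = poly_inner w r p + coeff q d * poly_inner w (gram_schmidt w d) p"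
    unfolding r_def by (simp add: poly_inner_diff_left[OF cw] poly_inner_smult_left)
  ultimately show ?case by (simp add: poly_inner_commute)
qed

lemma poly_inner_gram_schmidt_degree_less:
  assumes "pos_weight w" "degree q < k"
  shows "poly_inner w (gram_schmidt w k) q = 0"
  using assms gram_schmidt_orthogonal_lower[OF assms(1)] poly_inner_eq_0_if_orthogonal_gram_schmidt
  unfolding pos_weight_def by blast

lemma gram_schmidt_orthogonal:
  assumes "pos_weight w" "i \<noteq> j"
  shows "poly_inner w (gram_schmidt w i) (gram_schmidt w j) = 0"
proof (cases "i < j")
  case True
  then show ?thesis
    using gram_schmidt_orthogonal_lower[OF assms(1)] by (simp add: poly_inner_commute)
next
  case False
  then show ?thesis using gram_schmidt_orthogonal_lower[OF assms(1)] assms(2) by simp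
qed

lemma monic_OP_eq_gram_schmidt:
  assumes "pos_weight w"
  shows "monic_OP w k = gram_schmidt w k"
  unfolding monic_OP_def
proof (rule the_equality)
  show "degree (gram_schmidt w k) = k \<and> lead_coeff (gram_schmidt w k) = 1 \<and>
    (\<forall>q. degree q < k \<longrightarrow> integral {-1..1} (\<lambda>\<mu>. poly (gram_schmidt w k) \<mu> * poly q \<mu> * w \<mu>) = 0)"
    using poly_inner_gram_schmidt_degree_less[OF assms] by (simp add: poly_inner_def)
next
  fix p assume p: "degree p = k \<and> lead_coeff p = 1 \<and>
    (\<forall>q. degree q < k \<longrightarrow> integral {-1..1} (\<lambda>\<mu>. poly p \<mu> * poly q \<mu> * w \<mu>) = 0)"
  have cw: "continuous_on {-1..1} w" using assms unfolding pos_weight_def by auto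
  define r where "r = p - gram_schmidt w k"
  show "p = gram_schmidt w k"
  proof (rule ccontr)
    assume "p \<noteq> gram_schmidt w k"
    then have "r \<noteq> 0" by (simp add: r_def)
    moreover have "degree r \<le> k" "coeff r k = 0"
      unfolding r_def using p by (auto intro: degree_diff_le)
    ultimately have dr: "degree r < k" by (metis le_antisym leading_coeff_0_iff nat_less_le)
    have "poly_inner w r r = poly_inner w p r - poly_inner w (gram_schmidt w k) r"
      unfolding r_def by (rule poly_inner_diff_left[OF cw])
    also have "\<dots> = 0"
      using p dr poly_inner_gram_schmidt_degree_less[OF assms dr] by (simp add: poly_inner_def)
    finally show False using poly_inner_self_pos[OF assms \<open>r \<noteq> 0\<close>] by simp
  qed
qed

lemma poly_eq_sum_gram_schmidt:
  assumes w: "pos_weight w" and dR: "degree R \<le> N"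
  shows "R = (\<Sum>i\<le>N. smult (poly_inner w R (gram_schmidt w i) /
      poly_inner w (gram_schmidt w i) (gram_schmidt w i)) (gram_schmidt w i))"
    (is "R = ?E")
proof (rule ccontr)
  have cw: "continuous_on {-1..1} w" using w unfolding pos_weight_def by auto
  assume "R \<noteq> ?E"
  then have "R - ?E \<noteq> 0" by simp
  moreover have "poly_inner w (R - ?E) (gram_schmidt w j) = 0" if "j < Suc N" for j
    using that poly_inner_self_pos[OF w gram_schmidt_nonzero[of w j]]
    by (subst poly_inner_diff_left[OF cw], subst poly_inner_sum_smult_left_orthogonal[OF cw])
      (auto simp: gram_schmidt_orthogonal[OF w])
  moreover have "degree (R - ?E) < Suc N"
    using dR by (intro le_less_trans[OF degree_diff_le] degree_sum_le
        order.trans[OF degree_smult_le]) auto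
  ultimately show False
    using poly_inner_self_pos[OF w, of "R - ?E"]
      poly_inner_eq_0_if_orthogonal_gram_schmidt[OF cw, of "Suc N" "R - ?E" "R - ?E"]
    by simp
qed

lemma poly_inner_monom_gram_schmidt:
  assumes w: "pos_weight w"
  shows "poly_inner w (monom 1 k) (gram_schmidt w k) =
    poly_inner w (gram_schmidt w k) (gram_schmidt w k)"
proof -
  have cw: "continuous_on {-1..1} w" using w unfolding pos_weight_def by auto
  define S where "S = (\<Sum>j<k. smult (poly_inner w (monom 1 k) (gram_schmidt w j) /
      poly_inner w (gram_schmidt w j) (gram_schmidt w j)) (gram_schmidt w j))"
  have "monom 1 k = gram_schmidt w k + S"
    unfolding S_def by (subst gram_schmidt.simps[of w k]) simp
  moreover have "poly_inner w S (gram_schmidt w k) = 0"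
    unfolding S_def
    by (subst poly_inner_sum_smult_left_orthogonal[OF cw]) (auto simp: gram_schmidt_orthogonal[OF w])
  ultimately show ?thesis by (simp add: poly_inner_add_left[OF cw])
qed

lemma one_plus_mult_pos:
  assumes "a \<in> {-1<..<1::real}" "\<mu> \<in> {-1..1::real}"
  shows "0 < 1 + a * \<mu>"
proof -
  have "\<bar>a\<bar> * \<bar>\<mu>\<bar> \<le> \<bar>a\<bar>" "\<bar>a\<bar> < 1"
    using assms by (auto intro: mult_left_le)
  then have "\<bar>a * \<mu>\<bar> < 1" by (simp add: abs_mult)
  then show ?thesis by (simp add: abs_less_iff)
qed

lemma pos_weight_inverse_power:
  assumes "a \<in> {-1<..<1}"
  shows "pos_weight (\<lambda>\<mu>. 1 / (1 + a * \<mu>) ^ n)"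
proof -
  have "1 + a * \<mu> \<noteq> 0" if "\<mu> \<in> {-1..1}" for \<mu>
    using one_plus_mult_pos[OF assms that] by simp
  then show ?thesis
    unfolding pos_weight_def using one_plus_mult_pos[OF assms] by (auto intro!: continuous_intros)
qed

lemma pos_weight_omega: "a \<in> {-1<..<1} \<Longrightarrow> pos_weight (omega a)"
  unfolding omega_def[abs_def] by (rule pos_weight_inverse_power)

lemma pos_weight_omegat: "a \<in> {-1<..<1} \<Longrightarrow> pos_weight (omegat a)"
  unfolding omegat_def[abs_def] by (rule pos_weight_inverse_power)

lemma phi_eq_gram_schmidt: "a \<in> {-1<..<1} \<Longrightarrow> phi a k = gram_schmidt (omega a) k"
  unfolding phi_def by (rule monic_OP_eq_gram_schmidt[OF pos_weight_omega])

lemma phit_eq_gram_schmidt: "a \<in> {-1<..<1} \<Longrightarrow> phit a k = gram_schmidt (omegat a) k"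
  unfolding phit_def by (rule monic_OP_eq_gram_schmidt[OF pos_weight_omegat])

lemma omega_eq_omegat_mult:
  assumes "1 + a * \<mu> \<noteq> 0"
  shows "omega a \<mu> = omegat a \<mu> * (1 + a * \<mu>)"
proof -
  have "(1 + a * \<mu>) ^ 5 = (1 + a * \<mu>) ^ 4 * (1 + a * \<mu>)"
    by (simp flip: power_Suc2)
  then show ?thesis using assms unfolding omega_def omegat_def by simp
qed

lemma omega_has_field_derivative:
  assumes "1 + a * \<mu> \<noteq> 0"
  shows "((\<lambda>b. omega b \<mu>) has_field_derivative -4 * \<mu> * omegat a \<mu>) (at a within S)"
proof -
  have "((\<lambda>b. (1 + b * \<mu>) ^ 4) has_field_derivative 4 * (1 + a * \<mu>) ^ 3 * \<mu>) (at a within S)"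
    by (auto intro!: derivative_eq_intros)
  from DERIV_inverse_fun[OF this] have "((\<lambda>b. omega b \<mu>) has_field_derivative
      - (4 * (1 + a * \<mu>) ^ 3 * \<mu> * inverse (((1 + a * \<mu>) ^ 4) ^ 2))) (at a within S)"
    using assms unfolding omega_def by (simp add: inverse_eq_divide)
  moreover have "- (4 * (1 + a * \<mu>) ^ 3 * \<mu> * inverse (((1 + a * \<mu>) ^ 4) ^ 2)) = -4 * \<mu> * omegat a \<mu>"
    using assms unfolding omegat_def by (simp add: field_simps)
  ultimately show ?thesis by (rule DERIV_cong)
qed

lemma poly_eq_sum_coeff:
  fixes p :: "'a::comm_semiring_1 poly"
  assumes "degree p \<le> n"
  shows "poly p x = (\<Sum>r\<le>n. coeff p r * x ^ r)"
  by (subst poly_as_sum_of_monoms'[OF assms, symmetric]) (simp add: poly_sum poly_monom)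

definition moment :: "(real \<Rightarrow> real) \<Rightarrow> nat \<Rightarrow> real" where
  "moment w m = integral {-1..1} (\<lambda>\<mu>. \<mu> ^ m * w \<mu>)"

lemma poly_inner_eq_moments:
  assumes cw: "continuous_on {-1..1} w" and "degree p \<le> n" "degree q \<le> n"
  shows "poly_inner w p q = (\<Sum>r\<le>n. \<Sum>s\<le>n. coeff p r * coeff q s * moment w (r + s))"
proof -
  have int: "(\<lambda>\<mu>. c * (\<mu> ^ m * w \<mu>)) integrable_on {-1..1::real}" for c m
    by (intro integrable_continuous_interval continuous_intros cw)
  have "poly p \<mu> * poly q \<mu> * w \<mu> =
      (\<Sum>r\<le>n. \<Sum>s\<le>n. coeff p r * coeff q s * (\<mu> ^ (r + s) * w \<mu>))" for \<mu>
  proof -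
    have "poly p \<mu> * poly q \<mu> * w \<mu> =
        (\<Sum>r\<le>n. \<Sum>s\<le>n. (coeff p r * \<mu> ^ r) * (coeff q s * \<mu> ^ s)) * w \<mu>"
      by (simp only: poly_eq_sum_coeff[OF assms(2)] poly_eq_sum_coeff[OF assms(3)] sum_product)
    also have "\<dots> = (\<Sum>r\<le>n. \<Sum>s\<le>n. coeff p r * coeff q s * (\<mu> ^ (r + s) * w \<mu>))"
      by (simp add: sum_distrib_left sum_distrib_right power_add mult_ac)
    finally show ?thesis .
  qed
  then have "poly_inner w p q =
      integral {-1..1} (\<lambda>\<mu>. \<Sum>r\<le>n. \<Sum>s\<le>n. coeff p r * coeff q s * (\<mu> ^ (r + s) * w \<mu>))"
    unfolding poly_inner_def by presburger
  also have "\<dots> = (\<Sum>r\<le>n. \<Sum>s\<le>n. coeff p r * coeff q s * moment w (r + s))"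
    unfolding moment_def
    by (simp add: integral_sum integrable_sum int)
  finally show ?thesis .
qed

lemma differentiable_on_cong:
  assumes "\<And>x. x \<in> S \<Longrightarrow> f x = g x" "f differentiable_on S"
  shows "g differentiable_on S"
  using assms has_derivative_transform unfolding differentiable_on_def differentiable_def by metis

lemma differentiable_on_sum:
  "(\<And>i. i \<in> I \<Longrightarrow> f i differentiable_on S) \<Longrightarrow> (\<lambda>x. \<Sum>i\<in>I. f i x) differentiable_on S"
  unfolding differentiable_on_def by (cases "finite I") (simp_all add: differentiable_sum)

lemma moment_omega_differentiable_on: "(\<lambda>b. moment (omega b) m) differentiable_on {-1<..<1}"
  unfolding differentiable_on_def
proof
  fix a :: real assume a: "a \<in> {-1<..<1}"
  have nz: "1 + x * t \<noteq> 0" if "x \<in> {-1<..<1}" "t \<in> cbox (-1) 1" for x t :: real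
    using one_plus_mult_pos[of x t] that by auto
  have "(\<lambda>b. integral (cbox (-1) 1) (\<lambda>\<mu>. \<mu> ^ m * omega b \<mu>)) field_differentiable
      at a within {-1<..<1}"
  proof (rule leibniz_rule_field_differentiable[where fx = "\<lambda>x t. t ^ m * (-4 * t * omegat x t)"])
    show "((\<lambda>x. t ^ m * omega x t) has_field_derivative t ^ m * (-4 * t * omegat x t))
        (at x within {-1<..<1})" if "x \<in> {-1<..<1}" "t \<in> cbox (-1) 1" for x t :: real
      using omega_has_field_derivative[OF nz[OF that]] by (rule DERIV_cmult)
    show "(\<lambda>t. t ^ m * omega x t) integrable_on cbox (-1) 1" if "x \<in> {-1<..<1}" for x :: real
      unfolding omega_def using nz[OF that] by (intro integrable_continuous continuous_intros) auto
    show "continuous_on ({-1<..<1} \<times> cbox (-1) 1) (\<lambda>(x, t). t ^ m * (-4 * t * omegat x t))"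
      unfolding omegat_def case_prod_beta using nz by (intro continuous_intros) auto
  qed (use a in \<open>auto simp: convex_real_interval\<close>)
  then show "(\<lambda>b. moment (omega b) m) differentiable at a within {-1<..<1}"
    unfolding moment_def by (simp add: field_differentiable_imp_differentiable)
qed

lemma poly_inner_omega_differentiable_on:
  assumes "\<And>b. b \<in> {-1<..<1} \<Longrightarrow> degree (p b) \<le> n"
    and "\<And>b. b \<in> {-1<..<1} \<Longrightarrow> degree (q b) \<le> n"
    and "\<And>r. (\<lambda>b. coeff (p b) r) differentiable_on {-1<..<1}"
    and "\<And>s. (\<lambda>b. coeff (q b) s) differentiable_on {-1<..<1}"
  shows "(\<lambda>b. poly_inner (omega b) (p b) (q b)) differentiable_on {-1<..<1}"
proof (rule differentiable_on_cong)
  show "(\<lambda>b. \<Sum>r\<le>n. \<Sum>s\<le>n. coeff (p b) r * coeff (q b) s * moment (omega b) (r + s))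
      differentiable_on {-1<..<1}"
    using assms(3,4) moment_omega_differentiable_on
    unfolding differentiable_on_def by (auto intro!: derivative_intros)
  show "(\<Sum>r\<le>n. \<Sum>s\<le>n. coeff (p b) r * coeff (q b) s * moment (omega b) (r + s)) =
      poly_inner (omega b) (p b) (q b)" if "b \<in> {-1<..<1}" for b
    using pos_weight_omega[OF that] assms(1,2)[OF that]
    unfolding pos_weight_def by (simp add: poly_inner_eq_moments)
qed

lemma coeff_gram_schmidt_omega_differentiable_on:
  "(\<lambda>b. coeff (gram_schmidt (omega b) k) j) differentiable_on {-1<..<1}"
proof (induction k arbitrary: j rule: less_induct)
  case (less k)
  have inner_monom: "(\<lambda>b. poly_inner (omega b) (monom 1 k) (gram_schmidt (omega b) i))
      differentiable_on {-1<..<1}" if "i < k" for i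
    using that less.IH
    by (intro poly_inner_omega_differentiable_on[where n = k]) (auto simp: degree_monom_le)
  have inner_self: "(\<lambda>b. poly_inner (omega b) (gram_schmidt (omega b) i) (gram_schmidt (omega b) i))
      differentiable_on {-1<..<1}" if "i < k" for i
    using that less.IH by (intro poly_inner_omega_differentiable_on[where n = i]) auto
  have "coeff (gram_schmidt (omega b) k) j = coeff (monom 1 k) j - (\<Sum>i<k.
      poly_inner (omega b) (monom 1 k) (gram_schmidt (omega b) i) *
      inverse (poly_inner (omega b) (gram_schmidt (omega b) i) (gram_schmidt (omega b) i)) *
      coeff (gram_schmidt (omega b) i) j)" for b
    by (subst gram_schmidt.simps) (simp add: coeff_diff coeff_sum divide_inverse)
  moreover have "poly_inner (omega b) (gram_schmidt (omega b) i) (gram_schmidt (omega b) i) \<noteq> 0"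
    if "b \<in> {-1<..<1}" for b i
    using poly_inner_self_pos[OF pos_weight_omega[OF that] gram_schmidt_nonzero[of "omega b" i]] by simp
  ultimately show ?case
    by (simp only:, intro differentiable_on_diff differentiable_on_const differentiable_on_sum
        differentiable_on_mult differentiable_on_inverse inner_monom inner_self less.IH)
      auto
qed

lemma coeff_phi_differentiable_on: "(\<lambda>b. coeff (phi b k) j) differentiable_on {-1<..<1}"
  by (rule differentiable_on_cong[OF _ coeff_gram_schmidt_omega_differentiable_on])
    (simp add: phi_eq_gram_schmidt)

lemma degree_phi: "a \<in> {-1<..<1} \<Longrightarrow> degree (phi a k) = k"
  by (simp add: phi_eq_gram_schmidt)

lemma coeff_phi_degree: "a \<in> {-1<..<1} \<Longrightarrow> coeff (phi a k) k = 1"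
  by (simp add: phi_eq_gram_schmidt)

text \<open>The leading coefficient of \<open>\<phi>\<^sub>k\<close> is \<open>1\<close> for every \<open>a\<close>, so only the lower ones vary.\<close>

definition phi_param_deriv :: "real \<Rightarrow> nat \<Rightarrow> real poly" where
  "phi_param_deriv a k = (\<Sum>j<k. monom (deriv (\<lambda>b. coeff (phi b k) j) a) j)"

lemma coeff_phi_param_deriv_eq_0: "k \<le> m \<Longrightarrow> coeff (phi_param_deriv a k) m = 0"
  unfolding phi_param_deriv_def by (simp add: coeff_sum coeff_monom)

lemma poly_phi_has_field_derivative:
  assumes a: "a \<in> {-1<..<1}"
  shows "((\<lambda>b. poly (phi b k) \<mu>) has_field_derivative poly (phi_param_deriv a k) \<mu>) (at a)"
proof -
  have top: "poly (phi b k) \<mu> = \<mu> ^ k + (\<Sum>j<k. coeff (phi b k) j * \<mu> ^ j)"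
    if "b \<in> {-1<..<1}" for b
    using poly_eq_sum_coeff[of "phi b k" k \<mu>] that
    by (simp add: degree_phi coeff_phi_degree lessThan_Suc_atMost[symmetric])
  have "((\<lambda>b. coeff (phi b k) j) has_field_derivative deriv (\<lambda>b. coeff (phi b k) j) a) (at a)" for j
    using coeff_phi_differentiable_on[of k j] a
    by (simp add: differentiable_on_eq_differentiable_at DERIV_deriv_iff_real_differentiable)
  then have "((\<lambda>b. \<mu> ^ k + (\<Sum>j<k. coeff (phi b k) j * \<mu> ^ j)) has_field_derivative
      0 + (\<Sum>j<k. deriv (\<lambda>b. coeff (phi b k) j) a * \<mu> ^ j)) (at a)"
    by (intro DERIV_add DERIV_const DERIV_sum DERIV_cmult_right)
  then have "((\<lambda>b. \<mu> ^ k + (\<Sum>j<k. coeff (phi b k) j * \<mu> ^ j)) has_field_derivative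
      poly (phi_param_deriv a k) \<mu>) (at a)"
    by (simp add: phi_param_deriv_def poly_sum poly_monom)
  then show ?thesis
    by (rule has_field_derivative_transform_within_open[where S = "{-1<..<1}"]) (use a top in auto)
qed

lemma Phi_eq_omegat_poly:
  assumes "a \<in> {-1<..<1}" "\<mu> \<in> {-1..1}"
  shows "Phi a k \<mu> = omegat a \<mu> * poly ([:1, a:] * phi a k) \<mu>"
  using omega_eq_omegat_mult one_plus_mult_pos[OF assms] unfolding Phi_def by (simp add: algebra_simps)

definition Phi_deriv_poly :: "real \<Rightarrow> nat \<Rightarrow> real poly" where
  "Phi_deriv_poly a k = smult (-4) (pCons 0 (phi a k)) + [:1, a:] * phi_param_deriv a k"

lemma Phi_has_field_derivative:
  assumes a: "a \<in> {-1<..<1}" and \<mu>: "\<mu> \<in> {-1..1}"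
  shows "((\<lambda>b. Phi b k \<mu>) has_field_derivative omegat a \<mu> * poly (Phi_deriv_poly a k) \<mu>) (at a)"
proof -
  have nz: "1 + a * \<mu> \<noteq> 0" using one_plus_mult_pos[OF a \<mu>] by simp
  show ?thesis
    unfolding Phi_def
    by (rule DERIV_cong[OF DERIV_mult[OF omega_has_field_derivative[OF nz]
          poly_phi_has_field_derivative[OF a]]])
      (simp add: omega_eq_omegat_mult[OF nz] Phi_deriv_poly_def algebra_simps)
qed

lemma coeff_linear_mult_Suc:
  fixes q :: "'a::comm_semiring_1 poly"
  shows "coeff ([:1, a:] * q) (Suc m) = coeff q (Suc m) + a * coeff q m"
  by (simp add: mult_pCons_left)

lemma coeff_linear_mult_phi_above:
  assumes "a \<in> {-1<..<1}" "k \<le> m"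
  shows "coeff ([:1, a:] * phi a k) (Suc m) = (if m = k then a else 0)"
  using assms by (auto simp: coeff_linear_mult_Suc coeff_phi_degree degree_phi coeff_eq_0)

lemma coeff_Phi_deriv_poly_above:
  assumes "a \<in> {-1<..<1}" "k \<le> m"
  shows "coeff (Phi_deriv_poly a k) (Suc m) = (if m = k then -4 else 0)"
  using assms unfolding Phi_deriv_poly_def
  by (auto simp: coeff_linear_mult_Suc coeff_phi_param_deriv_eq_0 coeff_phi_degree degree_phi coeff_eq_0)

definition Ihat_deriv_poly ::
    "nat \<Rightarrow> (nat \<Rightarrow> real \<Rightarrow> real) \<Rightarrow> (real \<Rightarrow> real) \<Rightarrow> real \<Rightarrow> real poly" where
  "Ihat_deriv_poly N f \<alpha> z = (\<Sum>i\<le>N. smult (deriv (f i) z) ([:1, \<alpha> z:] * phi (\<alpha> z) i) +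
      smult (f i z * deriv \<alpha> z) (Phi_deriv_poly (\<alpha> z) i))"

lemma Ihat_has_field_derivative:
  assumes f: "\<And>i. i \<le> N \<Longrightarrow> f i differentiable at z" and \<alpha>: "\<alpha> differentiable at z"
    and a: "\<alpha> z \<in> {-1<..<1}" and \<mu>: "\<mu> \<in> {-1..1}"
  shows "((\<lambda>y. Ihat N f \<alpha> y \<mu>) has_field_derivative
    omegat (\<alpha> z) \<mu> * poly (Ihat_deriv_poly N f \<alpha> z) \<mu>) (at z)"
proof -
  have "((\<lambda>y. f i y * Phi (\<alpha> y) i \<mu>) has_field_derivative
      deriv (f i) z * Phi (\<alpha> z) i \<mu> +
      omegat (\<alpha> z) \<mu> * poly (Phi_deriv_poly (\<alpha> z) i) \<mu> * deriv \<alpha> z * f i z) (at z)"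
    if "i \<le> N" for i
    using f[OF that] \<alpha>
    by (intro DERIV_mult DERIV_chain2[where g = \<alpha>, OF Phi_has_field_derivative[OF a \<mu>]])
      (simp_all add: DERIV_deriv_iff_real_differentiable)
  then show ?thesis
    unfolding Ihat_def
    by (intro DERIV_cong[OF DERIV_sum])
      (auto simp: Ihat_deriv_poly_def poly_sum sum_distrib_left Phi_eq_omegat_poly[OF a \<mu>]
        algebra_simps)
qed

lemma coeff_Ihat_deriv_poly_above:
  assumes "\<alpha> z \<in> {-1<..<1}" "N \<le> m"
  shows "coeff (Ihat_deriv_poly N f \<alpha> z) (Suc m) =
    (if m = N then \<alpha> z * deriv (f N) z - 4 * f N z * deriv \<alpha> z else 0)"
proof -
  have "coeff (Ihat_deriv_poly N f \<alpha> z) (Suc m) =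
      (\<Sum>i\<le>N. if i = m then \<alpha> z * deriv (f i) z - 4 * f i z * deriv \<alpha> z else 0)"
    unfolding Ihat_deriv_poly_def coeff_sum using assms
    by (intro sum.cong refl)
      (auto simp: coeff_linear_mult_phi_above coeff_Phi_deriv_poly_above simp del: mult_pCons_left)
  then show ?thesis using assms by auto
qed

lemma degree_Ihat_deriv_poly:
  assumes "\<alpha> z \<in> {-1<..<1}"
  shows "degree (Ihat_deriv_poly N f \<alpha> z) \<le> Suc N"
proof (rule degree_le, intro allI impI)
  fix k assume "Suc N < k"
  then obtain m where "k = Suc m" "N < m" by (cases k) auto
  then show "coeff (Ihat_deriv_poly N f \<alpha> z) k = 0"
    using coeff_Ihat_deriv_poly_above[where \<alpha> = \<alpha> and z = z and N = N and m = m, OF assms] by simp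
qed

lemma Kt_eq_poly_inner:
  assumes "a \<in> {-1<..<1}"
  shows "Kt a j k = poly_inner (omegat a) (monom 1 j) (gram_schmidt (omegat a) k)"
  unfolding Kt_def poly_inner_def phit_eq_gram_schmidt[OF assms] by (simp add: poly_monom)

lemma Kt_eq_0:
  assumes "a \<in> {-1<..<1}" "j < k"
  shows "Kt a j k = 0"
  using poly_inner_gram_schmidt_degree_less[OF pos_weight_omegat[OF assms(1)], of "monom 1 j" k] assms
  by (simp add: Kt_eq_poly_inner poly_inner_commute degree_monom_eq)

lemma Kt_diag:
  assumes "a \<in> {-1<..<1}"
  shows "Kt a k k = poly_inner (omegat a) (gram_schmidt (omegat a) k) (gram_schmidt (omegat a) k)"
  using Kt_eq_poly_inner[OF assms] poly_inner_monom_gram_schmidt[OF pos_weight_omegat[OF assms]]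
  by simp

lemma integral_power_mult_Phit:
  "integral {-1..1} (\<lambda>\<mu>. \<mu> ^ j * (c * Phit a k \<mu>)) = c * Kt a j k"
  unfolding Kt_def Phit_def by (simp add: mult_ac)

lemma Pt_residual:
  assumes a: "a \<in> {-1<..<1}" and dP: "degree P \<le> Suc N"
    and g: "\<And>\<mu>. \<mu> \<in> {-1..1} \<Longrightarrow> g \<mu> = omegat a \<mu> * poly P \<mu>"
    and \<mu>: "\<mu> \<in> {-1..1}"
  shows "g \<mu> - Pt a N g \<mu> = coeff P (Suc N) * Phit a (Suc N) \<mu>"
proof -
  define w where "w = omegat a"
  define c where "c = coeff P (Suc N)"
  define R where "R = P - smult c (gram_schmidt w (Suc N))"
  have w: "pos_weight w" unfolding w_def by (rule pos_weight_omegat[OF a])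
  then have cw: "continuous_on {-1..1} w" unfolding pos_weight_def by simp
  have phit: "phit a i = gram_schmidt w i" for i
    unfolding w_def by (rule phit_eq_gram_schmidt[OF a])
  have dR: "degree R \<le> N"
  proof (rule degree_le, intro allI impI)
    fix k assume "N < k"
    then show "coeff R k = 0"
      using dP by (cases "k = Suc N") (auto simp: R_def c_def coeff_eq_0)
  qed
  have "integral {-1..1} (\<lambda>\<nu>. g \<nu> * poly (phit a i) \<nu>) = poly_inner w R (gram_schmidt w i)"
    if "i \<le> N" for i
  proof -
    have "integral {-1..1} (\<lambda>\<nu>. g \<nu> * poly (phit a i) \<nu>) = poly_inner w P (gram_schmidt w i)"
      unfolding poly_inner_def phit by (rule integral_cong) (simp add: g w_def mult_ac)
    also have "\<dots> = poly_inner w R (gram_schmidt w i)"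
      using gram_schmidt_orthogonal[OF w, of "Suc N" i] that
      by (simp add: R_def poly_inner_diff_left[OF cw] poly_inner_smult_left)
    finally show ?thesis .
  qed
  then have "Pt a N g \<mu> = w \<mu> * poly (\<Sum>i\<le>N. smult (poly_inner w R (gram_schmidt w i) /
      poly_inner w (gram_schmidt w i) (gram_schmidt w i)) (gram_schmidt w i)) \<mu>"
    unfolding Pt_def Phit_def poly_sum sum_distrib_left
    by (intro sum.cong refl) (simp add: Kt_diag[OF a] phit w_def)
  also have "\<dots> = w \<mu> * poly R \<mu>"
    using poly_eq_sum_gram_schmidt[OF w dR] by simp
  finally show ?thesis
    by (simp add: g[OF \<mu>] R_def Phit_def phit w_def c_def algebra_simps)
qed

lemma deriv_Ihat_minus_Pt:
  assumes f: "\<And>i. i \<le> N \<Longrightarrow> f i differentiable at z" and \<alpha>: "\<alpha> differentiable at z"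
    and a: "\<alpha> z \<in> {-1<..<1}" and \<mu>: "\<mu> \<in> {-1..1}"
  defines "g \<equiv> \<lambda>\<mu>. deriv (\<lambda>y. Ihat N f \<alpha> y \<mu>) z"
  shows "g \<mu> - Pt (\<alpha> z) N g \<mu> =
    (\<alpha> z * deriv (f N) z - 4 * f N z * deriv \<alpha> z) * Phit (\<alpha> z) (N + 1) \<mu>"
proof -
  have "g \<nu> = omegat (\<alpha> z) \<nu> * poly (Ihat_deriv_poly N f \<alpha> z) \<nu>" if "\<nu> \<in> {-1..1}" for \<nu>
    unfolding g_def by (rule DERIV_imp_deriv[OF Ihat_has_field_derivative[OF f \<alpha> a that]])
  from Pt_residual[OF a degree_Ihat_deriv_poly[where \<alpha> = \<alpha> and z = z, OF a] this \<mu>]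
  show ?thesis
    using coeff_Ihat_deriv_poly_above[where \<alpha> = \<alpha> and z = z and m = N and N = N, OF a] by simp
qed

lemma integral_power_deriv_Ihat_minus_Pt:
  assumes f: "\<And>i. i \<le> N \<Longrightarrow> f i differentiable at z" and \<alpha>: "\<alpha> differentiable at z"
    and a: "\<alpha> z \<in> {-1<..<1}" and "k \<le> N"
  defines "g \<equiv> \<lambda>\<mu>. deriv (\<lambda>y. Ihat N f \<alpha> y \<mu>) z"
    and "c \<equiv> \<alpha> z * deriv (f N) z - 4 * f N z * deriv \<alpha> z"
  shows "integral {-1..1} (\<lambda>\<mu>. \<mu> ^ (k + 1) * (g \<mu> - Pt (\<alpha> z) N g \<mu>)) =
    (if k < N then 0 else Kt (\<alpha> z) (N + 1) (N + 1) * c)"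
proof -
  have "integral {-1..1} (\<lambda>\<mu>. \<mu> ^ (k + 1) * (g \<mu> - Pt (\<alpha> z) N g \<mu>)) =
      integral {-1..1} (\<lambda>\<mu>. \<mu> ^ (k + 1) * (c * Phit (\<alpha> z) (N + 1) \<mu>))"
    unfolding g_def c_def by (rule integral_cong) (simp add: deriv_Ihat_minus_Pt[OF f \<alpha> a])
  also have "\<dots> = c * Kt (\<alpha> z) (k + 1) (N + 1)"
    by (rule integral_power_mult_Phit)
  finally show ?thesis
    using \<open>k \<le> N\<close> Kt_eq_0[OF a, of "k + 1" "N + 1"] by simp
qed

theorem mainTheorem8:
  fixes N :: nat and f :: "nat \<Rightarrow> real \<Rightarrow> real" and \<alpha> :: "real \<Rightarrow> real"
  assumes N: "N \<ge> 1"
    and f_diff: "\<And>i z. i \<le> N \<Longrightarrow> f i differentiable at z"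
    and alpha_diff: "\<And>z. \<alpha> differentiable at z"
    and alpha_range: "\<And>z. \<alpha> z \<in> {-1<..<1}"
    and f1: "f 1 = (\<lambda>z. 0)"
  shows "\<forall>z. let a = \<alpha> z;
              g = (\<lambda>\<mu>. deriv (\<lambda>y. Ihat N f \<alpha> y \<mu>) z);
              c = a * deriv (f N) z - 4 * f N z * deriv \<alpha> z
          in (\<forall>\<mu>\<in>{-1..1}. g \<mu> - Pt a N g \<mu> = c * Phit a (N + 1) \<mu>)
           \<and> (\<forall>k\<le>N. integral {-1..1} (\<lambda>\<mu>. \<mu> ^ (k + 1) * (g \<mu> - Pt a N g \<mu>)) =
                    (if k < N then 0 else Kt a (N + 1) (N + 1) * c))
           \<and> (N = 1 \<longrightarrow> (\<forall>\<mu>\<in>{-1..1}. g \<mu> - Pt a N g \<mu> = 0)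
                 \<and> (\<forall>k\<le>N. integral {-1..1} (\<lambda>\<mu>. \<mu> ^ (k + 1) * (g \<mu> - Pt a N g \<mu>)) = 0))"
proof -
  have "N = 1 \<Longrightarrow> \<alpha> z * deriv (f N) z - 4 * f N z * deriv \<alpha> z = 0" for z
    using f1 by simp
  then show ?thesis
    using deriv_Ihat_minus_Pt[where N = N and f = f, OF f_diff alpha_diff alpha_range]
      integral_power_deriv_Ihat_minus_Pt[where N = N and f = f, OF f_diff alpha_diff alpha_range]
    unfolding Let_def by auto
qed

end
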